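(* Let $F$ be WORDER or WMAJORITY with weights $w_1\ge\dots\ge w_n>0$. If SMO-GP-single on MO-$F$ is started with a non-redundant initial tree, then its expected optimization time is $O(n^3)$.
   Context: Fix an integer $n\ge 1$ and real weights $w_1\ge w_2\ge\dots\ge w_n>0$. The terminal set is $T=\{x_1,\bar x_1,\dots,x_n,\bar x_n\}$ ($\bar x_i$ is the complement of $x_i$; $x_i$ is called positive). A syntax tree is either the empty tree or a rooted ordered binary tree whose inner nodes are all labelled by the binary function $J$ (join, exactly two ordered children) and whose leaves are labelled by elements of $T$. The complexity $C(X)$ is the number of nodes of $X$ (0 for the empty tree). The leaf list $l$ of $X$ is the sequence of leaf labels in an inorder traversal. WORDER: build a list $S$ by scanning $l$ from front to rear and appending a literal only if neither it nor its complement is already in $S$; WORDER$(X)=\sum_{i:\,x_i\in S} w_i$; the expressed variables are the $x_i\in S$. WMAJORITY: WMAJORITY$(X)=\sum w_i$ over all $i$ such that $x_i$ occurs in $l$ at least once and at least as often as $\bar x_i$; these $x_i$ are the expressed variables. A tree is non-redundant if it is empty or if, with $k$ its number of expressed variables, its complexity is $2k-1$. MO-$F(X)=(F(X),C(X))$, $F$ maximized and $C$ minimized. Mutation (one HVL-Prime application): choose uniformly at random one of three operations. Substitute: replace a uniformly random leaf by a uniformly random $u\in T$. Insert: choose a uniformly random node $v$ and uniformly random $u\in T$, replace $v$ by a $J$-node with children $u$ and $v$ in uniformly random order (inserting into the empty tree yields the single leaf $u$). Delete: choose a uniformly random leaf $v$ with parent $p$ and sibling $u$, replace $p$ by $u$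 (deleting $p$ and $v$; deleting the only leaf of a one-leaf tree yields the empty tree). Dominance: $Y\succeq X$ iff $F(Y)\ge F(X)$ and $C(Y)\le C(X)$; $Y\succ X$ iff $Y\succeq X$ and ($F(Y)>F(X)$ or $C(Y)<C(X)$). A tree is Pareto optimal if no tree dominates it; the Pareto front is the set of objective vectors of Pareto optimal trees. SMO-GP-single: choose an initial tree $X$ and set $P:=\{X\}$; repeat: choose $X\in P$ uniformly at random, let $Y$ be $X$ after one HVL-Prime application; if no $Z\in P$ satisfies $Z\succ Y$, set $P:=(P\setminus\{Z\in P: Y\succeq Z\})\cup\{Y\}$. Expected optimization time: expected number of iterations until the population contains, for every objective vector in the Pareto front, a tree with that objective vector. *)

theory Defs
  imports "HOL-Probability.Probability"
begin

text \<open>Literal x_i is Pos i, its complement is Neg i (variables indexed 1..n).\<close>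
datatype lit = Pos nat | Neg nat

definition terminals :: "nat \<Rightarrow> lit set" where
  "terminals n = Pos ` {1..n} \<union> Neg ` {1..n}"

text \<open>Non-empty syntax trees; the empty tree is None in stree option.\<close>
datatype stree = L lit | J stree stree

fun nodes :: "stree \<Rightarrow> nat" where
  "nodes (L a) = 1"
| "nodes (J l r) = nodes l + nodes r + 1"

fun nleaves :: "stree \<Rightarrow> nat" where
  "nleaves (L a) = 1"
| "nleaves (J l r) = nleaves l + nleaves r"

fun leaves :: "stree \<Rightarrow> lit list" where
  "leaves (L a) = [a]"
| "leaves (J l r) = leaves l @ leaves r"

definition cplx :: "stree option \<Rightarrow> nat" where
  "cplx X = (case X of None \<Rightarrow> 0 | Some t \<Rightarrow> nodes t)"

definition leaflist :: "stree option \<Rightarrow> lit list" where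
  "leaflist X = (case X of None \<Rightarrow> [] | Some t \<Rightarrow> leaves t)"

definition valid_tree :: "nat \<Rightarrow> stree option \<Rightarrow> bool" where
  "valid_tree n X \<longleftrightarrow> set (leaflist X) \<subseteq> terminals n"

fun var :: "lit \<Rightarrow> nat" where
  "var (Pos i) = i" | "var (Neg i) = i"

fun compl :: "lit \<Rightarrow> lit" where
  "compl (Pos i) = Neg i" | "compl (Neg i) = Pos i"

fun worder_scan :: "lit list \<Rightarrow> lit list \<Rightarrow> lit list" where
  "worder_scan S [] = S"
| "worder_scan S (a # l) =
     (if a \<in> set S \<or> compl a \<in> set S then worder_scan S l else worder_scan (S @ [a]) l)"

definition worder_S :: "stree option \<Rightarrow> lit list" where
  "worder_S X = worder_scan [] (leaflist X)"

definition expressed_worder :: "stree option \<Rightarrow> nat set" where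
  "expressed_worder X = {i. Pos i \<in> set (worder_S X)}"

definition expressed_wmajority :: "stree option \<Rightarrow> nat set" where
  "expressed_wmajority X =
     {i. count (mset (leaflist X)) (Pos i) \<ge> 1 \<and>
         count (mset (leaflist X)) (Pos i) \<ge> count (mset (leaflist X)) (Neg i)}"

datatype fitness = WORDER | WMAJORITY

definition expressed :: "fitness \<Rightarrow> stree option \<Rightarrow> nat set" where
  "expressed F X = (case F of WORDER \<Rightarrow> expressed_worder X
                             | WMAJORITY \<Rightarrow> expressed_wmajority X)"

definition fit :: "fitness \<Rightarrow> (nat \<Rightarrow> real) \<Rightarrow> stree option \<Rightarrow> real" where
  "fit F w X = (\<Sum>i\<in>expressed F X. w i)"

definition non_redundant :: "fitness \<Rightarrow> stree option \<Rightarrow> bool" where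
  "non_redundant F X \<longleftrightarrow>
     X = None \<or> int (cplx X) = 2 * int (card (expressed F X)) - 1"

definition weakly_dom :: "fitness \<Rightarrow> (nat \<Rightarrow> real) \<Rightarrow> stree option \<Rightarrow> stree option \<Rightarrow> bool" where
  "weakly_dom F w Y X \<longleftrightarrow> fit F w Y \<ge> fit F w X \<and> cplx Y \<le> cplx X"

definition strictly_dom :: "fitness \<Rightarrow> (nat \<Rightarrow> real) \<Rightarrow> stree option \<Rightarrow> stree option \<Rightarrow> bool" where
  "strictly_dom F w Y X \<longleftrightarrow>
     weakly_dom F w Y X \<and> (fit F w Y > fit F w X \<or> cplx Y < cplx X)"

definition objvec :: "fitness \<Rightarrow> (nat \<Rightarrow> real) \<Rightarrow> stree option \<Rightarrow> real \<times> nat" where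
  "objvec F w X = (fit F w X, cplx X)"

definition pareto_optimal :: "nat \<Rightarrow> fitness \<Rightarrow> (nat \<Rightarrow> real) \<Rightarrow> stree option \<Rightarrow> bool" where
  "pareto_optimal n F w X \<longleftrightarrow>
     valid_tree n X \<and> \<not> (\<exists>Y. valid_tree n Y \<and> strictly_dom F w Y X)"

definition pareto_front :: "nat \<Rightarrow> fitness \<Rightarrow> (nat \<Rightarrow> real) \<Rightarrow> (real \<times> nat) set" where
  "pareto_front n F w = objvec F w ` {X. pareto_optimal n F w X}"

definition covers_front :: "nat \<Rightarrow> fitness \<Rightarrow> (nat \<Rightarrow> real) \<Rightarrow> stree option set \<Rightarrow> bool" where
  "covers_front n F w P \<longleftrightarrow> (\<forall>v\<in>pareto_front n F w. \<exists>X\<in>P. objvec F w X = v)"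

text \<open>Replace the k-th leaf (inorder, from 0) by u.\<close>
fun subst_leaf :: "stree \<Rightarrow> nat \<Rightarrow> lit \<Rightarrow> stree" where
  "subst_leaf (L a) k u = L u"
| "subst_leaf (J l r) k u =
     (if k < nleaves l then J (subst_leaf l k u) r else J l (subst_leaf r (k - nleaves l) u))"

text \<open>Replace the k-th node (preorder, from 0) v by J u v (b = True) or J v u (b = False).\<close>
fun ins_node :: "stree \<Rightarrow> nat \<Rightarrow> lit \<Rightarrow> bool \<Rightarrow> stree" where
  "ins_node t k u b =
     (if k = 0 then (if b then J (L u) t else J t (L u))
      else (case t of L a \<Rightarrow> t
           | J l r \<Rightarrow> if k - 1 < nodes l then J (ins_node l (k - 1) u b) r
                      else J l (ins_node r (k - 1 - nodes l) u b)))"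

text \<open>Delete the k-th leaf (inorder, from 0): its parent is replaced by its sibling;
  deleting the only leaf gives the empty tree (None).\<close>
fun del_leaf :: "stree \<Rightarrow> nat \<Rightarrow> stree option" where
  "del_leaf (L a) k = None"
| "del_leaf (J l r) k =
     (if k < nleaves l then
        (case del_leaf l k of None \<Rightarrow> Some r | Some l' \<Rightarrow> Some (J l' r))
      else
        (case del_leaf r (k - nleaves l) of None \<Rightarrow> Some l | Some r' \<Rightarrow> Some (J l r')))"

definition substitute :: "nat \<Rightarrow> stree option \<Rightarrow> stree option pmf" where
  "substitute n X = (case X of None \<Rightarrow> return_pmf None
     | Some t \<Rightarrow> do { k \<leftarrow> pmf_of_set {..<nleaves t}; u \<leftarrow> pmf_of_set (terminals n);
                      return_pmf (Some (subst_leaf t k u)) })"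

definition insert_op :: "nat \<Rightarrow> stree option \<Rightarrow> stree option pmf" where
  "insert_op n X = (case X of None \<Rightarrow> map_pmf (\<lambda>u. Some (L u)) (pmf_of_set (terminals n))
     | Some t \<Rightarrow> do { k \<leftarrow> pmf_of_set {..<nodes t}; u \<leftarrow> pmf_of_set (terminals n);
                      b \<leftarrow> pmf_of_set (UNIV :: bool set);
                      return_pmf (Some (ins_node t k u b)) })"

definition delete_op :: "stree option \<Rightarrow> stree option pmf" where
  "delete_op X = (case X of None \<Rightarrow> return_pmf None
     | Some t \<Rightarrow> map_pmf (del_leaf t) (pmf_of_set {..<nleaves t}))"

definition hvl_prime :: "nat \<Rightarrow> stree option \<Rightarrow> stree option pmf" where
  "hvl_prime n X = do { op \<leftarrow> pmf_of_set {0::nat, 1, 2};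
     (if op = 0 then substitute n X else if op = 1 then insert_op n X else delete_op X) }"

definition smo_step :: "nat \<Rightarrow> fitness \<Rightarrow> (nat \<Rightarrow> real) \<Rightarrow> stree option set \<Rightarrow> stree option set pmf" where
  "smo_step n F w P = do { X \<leftarrow> pmf_of_set P; Y \<leftarrow> hvl_prime n X;
     return_pmf (if (\<exists>Z\<in>P. strictly_dom F w Z Y) then P
                 else (P - {Z\<in>P. weakly_dom F w Y Z}) \<union> {Y}) }"

text \<open>The process stopped once the Pareto front is covered (so that the probability of
  not being covered at time t is the probability that the hitting time exceeds t).\<close>
definition stopped_step :: "nat \<Rightarrow> fitness \<Rightarrow> (nat \<Rightarrow> real) \<Rightarrow> stree option set \<Rightarrow> stree option set pmf" where
  "stopped_step n F w P = (if covers_front n F w P then return_pmf P else smo_step n F w P)"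

primrec smo_run :: "nat \<Rightarrow> fitness \<Rightarrow> (nat \<Rightarrow> real) \<Rightarrow> stree option \<Rightarrow> nat \<Rightarrow> stree option set pmf" where
  "smo_run n F w X0 0 = return_pmf {X0}"
| "smo_run n F w X0 (Suc t) = bind_pmf (smo_run n F w X0 t) (stopped_step n F w)"

text \<open>Expected optimization time E[T] = sum over t \<ge> 0 of Pr[T > t].\<close>
definition expected_opt_time :: "nat \<Rightarrow> fitness \<Rightarrow> (nat \<Rightarrow> real) \<Rightarrow> stree option \<Rightarrow> ennreal" where
  "expected_opt_time n F w X0 =
     (\<Sum>t. ennreal (measure_pmf.prob (smo_run n F w X0 t) {P. \<not> covers_front n F w P}))"

end

theory Submission
  imports Defs
begin

(* Fix n \<ge> 1 and weights w 1 \<ge> ... \<ge> w n > 0, and let W k = w 1 + ... + w k.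
   (1) Leaf lists: a tree is non-redundant iff its leaf list consists of distinct positive
       literals, and for such lists WORDER and WMAJORITY both express exactly these variables.
   (2) Pareto front: a tree expressing e variables has complexity at least 2e-1 and fitness at
       most W e, and the tree x_1 ... x_k attains (W k, 2k-1); so every point of the front is one
       of the "front points" (W k, 2k-1) with k \<le> n.
   (3) Invariant: a mutant of a non-redundant tree is non-redundant or dominated by its parent,
       so every population reached from a non-redundant start consists of valid non-redundant,
       pairwise incomparable trees, and therefore has at most n+1 members.
   (4) Potential: without the empty tree it is 2n minus the least complexity in the population
       (deleting a leaf of a simplest tree raises it); with the empty tree it is 2n plus the
       number of levels k up to which the front is covered (inserting a missing x_i, i \<le> k+1,
       into the tree at the last covered level k raises it).  It never decreases, is at most 3n,
       and rises in one iteration with probability at least 1/((n+1) * 3 * 2n).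
   (5) A general drift lemma for Markov chains with a bounded non-decreasing potential turns
       this into the bound 3n * 6n(n+1) \<le> 36 n^3 on the expected optimization time. *)

lemma emeasure_bind_pmf_lower:
  assumes "\<And>x. x \<in> B \<Longrightarrow> q \<le> emeasure (measure_pmf (f x)) A"
  shows "emeasure (measure_pmf M) B * q \<le> emeasure (measure_pmf (M \<bind> f)) A"
proof -
  have "emeasure (measure_pmf M) B * q = (\<integral>\<^sup>+x. q * indicator B x \<partial>measure_pmf M)"
    by (simp add: nn_integral_cmult_indicator mult.commute)
  also have "\<dots> \<le> (\<integral>\<^sup>+x. emeasure (measure_pmf (f x)) A \<partial>measure_pmf M)"
    by (rule nn_integral_mono) (use assms in \<open>auto split: split_indicator\<close>)
  also have "\<dots> = emeasure (measure_pmf (M \<bind> f)) A" by simp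
  finally show ?thesis .
qed

lemma emeasure_pmf_support_subset:
  assumes "set_pmf M \<subseteq> A"
  shows "1 \<le> emeasure (measure_pmf M) A"
proof -
  have "emeasure (measure_pmf M) (set_pmf M) \<le> emeasure (measure_pmf M) A"
    using assms by (rule emeasure_mono) simp
  thus ?thesis by (simp add: emeasure_pmf)
qed

lemma emeasure_bind_pmf_lower_all:
  assumes "\<And>x. x \<in> set_pmf M \<Longrightarrow> q \<le> emeasure (measure_pmf (f x)) A"
  shows "q \<le> emeasure (measure_pmf (M \<bind> f)) A"
  using emeasure_bind_pmf_lower[of "set_pmf M" q f A M] assms by (simp add: emeasure_pmf)

lemma emeasure_pmf_of_set_singleton:
  assumes "finite S" "x \<in> S"
  shows "ennreal (1 / real (card S)) \<le> emeasure (measure_pmf (pmf_of_set S)) {x}"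
proof -
  have "S \<noteq> {}" using assms by auto
  thus ?thesis using assms by (simp add: emeasure_pmf_single)
qed

section \<open>Expected hitting times via a non-decreasing potential\<close>

text \<open>If g decreases in expectation by at least one per step while the chain is in U, then the
  expected number of visits to U is at most g of the start state.\<close>
lemma expected_visits_le_supersolution:
  fixes step :: "'a \<Rightarrow> 'a pmf" and M :: "nat \<Rightarrow> 'a pmf" and g :: "'a \<Rightarrow> ennreal"
  assumes run0: "M 0 = return_pmf x0" and run_Suc: "\<And>t. M (Suc t) = M t \<bind> step"
    and inv0: "I x0" and inv_step: "\<And>x y. I x \<Longrightarrow> y \<in> set_pmf (step x) \<Longrightarrow> I y"
    and drift: "\<And>x. I x \<Longrightarrow> (\<integral>\<^sup>+y. g y \<partial>measure_pmf (step x)) + indicator U x \<le> g x"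
  shows "(\<Sum>t. emeasure (measure_pmf (M t)) U) \<le> g x0"
proof -
  define E where "E t = (\<integral>\<^sup>+x. g x \<partial>measure_pmf (M t))" for t
  have reach: "I x" if "x \<in> set_pmf (M t)" for x t
    using that by (induction t arbitrary: x) (auto simp: run0 run_Suc inv0 dest: inv_step)
  have E_Suc: "E (Suc t) + emeasure (measure_pmf (M t)) U \<le> E t" for t
  proof -
    have "E (Suc t) + emeasure (measure_pmf (M t)) U
        = (\<integral>\<^sup>+x. (\<integral>\<^sup>+y. g y \<partial>measure_pmf (step x)) + indicator U x \<partial>measure_pmf (M t))"
      by (simp add: E_def run_Suc nn_integral_add)
    also have "\<dots> \<le> E t"
      unfolding E_def by (rule nn_integral_mono_AE) (simp add: AE_measure_pmf_iff drift reach)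
    finally show ?thesis .
  qed
  have partial_sums: "(\<Sum>t<T. emeasure (measure_pmf (M t)) U) + E T \<le> E 0" for T
  proof (induction T)
    case (Suc T)
    have "(\<Sum>t<Suc T. emeasure (measure_pmf (M t)) U) + E (Suc T)
        = (\<Sum>t<T. emeasure (measure_pmf (M t)) U) + (E (Suc T) + emeasure (measure_pmf (M T)) U)"
      by (simp add: ac_simps)
    also have "\<dots> \<le> (\<Sum>t<T. emeasure (measure_pmf (M t)) U) + E T"
      by (rule add_left_mono) (rule E_Suc)
    finally show ?case using Suc by order
  qed simp
  show ?thesis
  proof (rule suminf_le_const[OF summableI])
    fix T
    have "(\<Sum>t<T. emeasure (measure_pmf (M t)) U) \<le> E 0"
      using partial_sums[of T] by (rule order_trans[rotated]) simp
    thus "(\<Sum>t<T. emeasure (measure_pmf (M t)) U) \<le> g x0" by (simp add: E_def run0)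
  qed
qed

lemma potential_drift:
  fixes step :: "'a \<Rightarrow> 'a pmf" and phi :: "'a \<Rightarrow> nat" and p :: real
  assumes mono: "\<And>y. y \<in> set_pmf (step x) \<Longrightarrow> phi x \<le> phi y \<and> phi y \<le> m" and p: "p > 0"
    and progress: "\<not> fin x \<Longrightarrow> ennreal p \<le> emeasure (measure_pmf (step x)) {y. phi x < phi y}"
  shows "(\<integral>\<^sup>+y. ennreal ((real m - phi y) / p) \<partial>measure_pmf (step x)) + indicator {x. \<not> fin x} x
         \<le> ennreal ((real m - phi x) / p)"
proof -
  let ?g = "\<lambda>x. ennreal ((real m - phi x) / p)" and ?A = "{y. phi x < phi y}"
  have pointwise: "?g y + ennreal (1 / p) * indicator ?A y \<le> ?g x" if y: "y \<in> set_pmf (step x)" for y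
  proof (cases "y \<in> ?A")
    case True
    have "(real m - phi y) / p + 1 / p \<le> (real m - phi x) / p"
      using p True by (simp add: divide_simps)
    thus ?thesis using True p mono[OF y] by (simp add: ennreal_plus[symmetric] del: ennreal_plus)
  next
    case False
    thus ?thesis using p mono[OF y] by (simp add: divide_right_mono ennreal_leI)
  qed
  have "indicator {x. \<not> fin x} x \<le> ennreal (1 / p) * emeasure (measure_pmf (step x)) ?A"
  proof (cases "fin x")
    case False
    have "ennreal (1 / p) * ennreal p \<le> ennreal (1 / p) * emeasure (measure_pmf (step x)) ?A"
      by (rule mult_left_mono) (use progress[OF False] in auto)
    moreover have "ennreal (1 / p) * ennreal p = 1" using p by (simp add: ennreal_mult[symmetric])
    ultimately show ?thesis using False by simp
  qed simp
  hence "(\<integral>\<^sup>+y. ?g y \<partial>measure_pmf (step x)) + indicator {x. \<not> fin x} x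
      \<le> (\<integral>\<^sup>+y. ?g y + ennreal (1 / p) * indicator ?A y \<partial>measure_pmf (step x))"
    by (simp add: nn_integral_add nn_integral_cmult_indicator add_left_mono)
  also have "\<dots> \<le> (\<integral>\<^sup>+y. ?g x \<partial>measure_pmf (step x))"
    by (rule nn_integral_mono_AE) (simp add: AE_measure_pmf_iff pointwise)
  also have "\<dots> = ?g x" by (simp add: measure_pmf.emeasure_space_1)
  finally show ?thesis .
qed

theorem hitting_time_by_potential:
  fixes step :: "'a \<Rightarrow> 'a pmf" and M :: "nat \<Rightarrow> 'a pmf" and phi :: "'a \<Rightarrow> nat"
    and I fin :: "'a \<Rightarrow> bool" and p :: real
  assumes run0: "M 0 = return_pmf x0" and run_Suc: "\<And>t. M (Suc t) = M t \<bind> step"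
    and inv0: "I x0"
    and inv_step: "\<And>x y. I x \<Longrightarrow> y \<in> set_pmf (step x) \<Longrightarrow> I y \<and> phi x \<le> phi y"
    and bounded: "\<And>x. I x \<Longrightarrow> phi x \<le> m"
    and p: "p > 0"
    and progress: "\<And>x. I x \<Longrightarrow> \<not> fin x \<Longrightarrow>
                      ennreal p \<le> emeasure (measure_pmf (step x)) {y. phi x < phi y}"
  shows "(\<Sum>t. ennreal (measure_pmf.prob (M t) {x. \<not> fin x})) \<le> ennreal (m / p)"
proof -
  have "(\<Sum>t. emeasure (measure_pmf (M t)) {x. \<not> fin x}) \<le> ennreal ((real m - phi x0) / p)"
  proof (rule expected_visits_le_supersolution[OF run0 run_Suc, of I])
    show "(\<integral>\<^sup>+y. ennreal ((real m - phi y) / p) \<partial>measure_pmf (step x)) + indicator {x. \<not> fin x} x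
          \<le> ennreal ((real m - phi x) / p)" if "I x" for x
      using that inv_step bounded by (intro potential_drift p progress) auto
  qed (use inv0 inv_step in auto)
  also have "\<dots> \<le> ennreal (m / p)" using p by (intro ennreal_leI divide_right_mono) auto
  finally show ?thesis by (simp add: measure_pmf.emeasure_eq_measure)
qed

definition pos_vars :: "lit list \<Rightarrow> nat set" where
  "pos_vars l = {i. Pos i \<in> set l}"

definition positive_distinct :: "lit list \<Rightarrow> bool" where
  "positive_distinct l \<longleftrightarrow> distinct l \<and> (\<forall>a\<in>set l. \<exists>i. a = Pos i)"

definition expressed_list :: "fitness \<Rightarrow> lit list \<Rightarrow> nat set" where
  "expressed_list F l = (case F of
       WORDER \<Rightarrow> {i. Pos i \<in> set (worder_scan [] l)}
     | WMAJORITY \<Rightarrow> {i. count (mset l) (Pos i) \<ge> 1 \<and> count (mset l) (Pos i) \<ge> count (mset l) (Neg i)})"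

lemma expressed_eq_expressed_list: "expressed F X = expressed_list F (leaflist X)"
  by (cases F) (simp_all add: expressed_def expressed_worder_def worder_S_def
      expressed_wmajority_def expressed_list_def)

lemma fit_eq_sum_expressed_list: "fit F w X = sum w (expressed_list F (leaflist X))"
  by (simp add: fit_def expressed_eq_expressed_list)

lemma pos_vars_append [simp]: "pos_vars (a @ b) = pos_vars a \<union> pos_vars b"
  by (auto simp: pos_vars_def)

lemma pos_vars_Cons [simp]: "pos_vars (x # b) = (case x of Pos i \<Rightarrow> {i} | Neg i \<Rightarrow> {}) \<union> pos_vars b"
  by (cases x) (auto simp: pos_vars_def)

lemma pos_vars_Nil [simp]: "pos_vars [] = {}"
  by (simp add: pos_vars_def)

lemma finite_pos_vars [simp]: "finite (pos_vars l)"
proof -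
  have "pos_vars l \<subseteq> var ` set l" by (force simp: pos_vars_def)
  thus ?thesis by (rule finite_subset) simp
qed

lemma card_pos_vars_eq: "card (pos_vars l) = card (Pos ` pos_vars l)"
  by (simp add: card_image inj_on_def)

lemma worder_scan_subset: "set (worder_scan S l) \<subseteq> set S \<union> set l"
  by (induction S l rule: worder_scan.induct) auto

lemma expressed_list_subset: "expressed_list F l \<subseteq> pos_vars l"
proof (cases F)
  case WORDER
  thus ?thesis using worder_scan_subset[of "[]" l] by (auto simp: expressed_list_def pos_vars_def)
next
  case WMAJORITY
  thus ?thesis by (auto simp: expressed_list_def pos_vars_def dest: count_inI[rotated])
qed

lemma fit_None: "fit F w None = 0"
  using expressed_list_subset[of F "[]"] by (simp add: fit_eq_sum_expressed_list leaflist_def)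

lemma worder_scan_positive_distinct:
  "distinct (S @ l) \<Longrightarrow> \<forall>a\<in>set (S @ l). \<exists>i. a = Pos i \<Longrightarrow> worder_scan S l = S @ l"
proof (induction l arbitrary: S)
  case (Cons a l)
  then obtain i where a: "a = Pos i" by auto
  have "a \<notin> set S" "compl a \<notin> set S" using Cons.prems a by auto
  hence "worder_scan S (a # l) = worder_scan (S @ [a]) l" by simp
  also have "\<dots> = S @ a # l" using Cons.prems by (subst Cons.IH) auto
  finally show ?case .
qed simp

lemma expressed_list_positive_distinct:
  assumes p: "positive_distinct l"
  shows "expressed_list F l = pos_vars l"
proof (cases F)
  case WORDER
  have "worder_scan [] l = l" using worder_scan_positive_distinct[of "[]" l] p
    by (auto simp: positive_distinct_def)
  thus ?thesis using WORDER by (simp add: expressed_list_def pos_vars_def)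
next
  case WMAJORITY
  have "Neg i \<notin> set l" for i using p by (auto simp: positive_distinct_def)
  hence no_neg: "count (mset l) (Neg i) = 0" for i by (simp add: count_mset_0_iff)
  have "count (mset l) (Pos i) \<ge> 1 \<longleftrightarrow> Pos i \<in> set l" for i
    by (simp add: Suc_le_eq)
  moreover have "count (mset l) (Neg i) \<le> count (mset l) (Pos i)" for i
    by (simp only: no_neg)
  ultimately show ?thesis using WMAJORITY
    by (auto simp: expressed_list_def pos_vars_def simp del: count_mset)
qed

lemma card_pos_vars_positive_distinct:
  assumes p: "positive_distinct l"
  shows "card (pos_vars l) = length l"
proof -
  have "set l = Pos ` pos_vars l" using p by (auto simp: positive_distinct_def pos_vars_def)
  thus ?thesis using p by (simp add: card_pos_vars_eq positive_distinct_def distinct_card[symmetric])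
qed

lemma card_expressed_list_le: "card (expressed_list F l) \<le> length l"
proof -
  have "card (expressed_list F l) \<le> card (pos_vars l)"
    by (rule card_mono[OF finite_pos_vars expressed_list_subset])
  also have "\<dots> \<le> card (set l)"
    unfolding card_pos_vars_eq by (rule card_mono) (auto simp: pos_vars_def)
  also have "\<dots> \<le> length l" by (rule card_length)
  finally show ?thesis .
qed

lemma card_expressed_list_eq_iff:
  "card (expressed_list F l) = length l \<longleftrightarrow> positive_distinct l"
proof
  assume e: "card (expressed_list F l) = length l"
  have c1: "card (expressed_list F l) \<le> card (pos_vars l)"
    by (rule card_mono[OF finite_pos_vars expressed_list_subset])
  have c2: "card (Pos ` pos_vars l) \<le> card (set l)" by (rule card_mono) (auto simp: pos_vars_def)
  have c3: "card (set l) \<le> length l" by (rule card_length)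
  have "card (set l) = length l" using e c1 c2 c3 card_pos_vars_eq[of l] by linarith
  hence "distinct l" by (simp add: card_distinct)
  moreover have "Pos ` pos_vars l = set l"
    by (rule card_subset_eq) (use e c1 c2 c3 card_pos_vars_eq[of l] in \<open>auto simp: pos_vars_def\<close>)
  ultimately show "positive_distinct l" by (auto simp: positive_distinct_def)
next
  assume "positive_distinct l"
  thus "card (expressed_list F l) = length l"
    by (simp add: expressed_list_positive_distinct card_pos_vars_positive_distinct)
qed

lemma positive_distinct_insert:
  "positive_distinct (a @ b) \<Longrightarrow> i \<notin> pos_vars a \<Longrightarrow> i \<notin> pos_vars b \<Longrightarrow> positive_distinct (a @ Pos i # b)"
  unfolding positive_distinct_def pos_vars_def by auto

lemma positive_distinct_delete: "positive_distinct (a @ x # b) \<Longrightarrow> positive_distinct (a @ b)"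
  unfolding positive_distinct_def by auto

lemma positive_distinct_insert_fails:
  assumes "positive_distinct (a @ b)" "\<not> positive_distinct (a @ u # b)"
  shows "pos_vars [u] \<subseteq> pos_vars a \<union> pos_vars b"
  using assms positive_distinct_insert by (cases u) auto

lemma length_leaves: "length (leaves t) = nleaves t"
  by (induction t) auto

lemma nleaves_pos: "nleaves t \<ge> 1"
  by (induction t) auto

lemma nodes_nleaves: "nodes t = 2 * nleaves t - 1"
proof (induction t)
  case (J l r) thus ?case using nleaves_pos[of l] nleaves_pos[of r] by simp
qed simp

lemma nodes_nonzero: "nodes t \<noteq> 0"
  by (cases t) auto

lemma leaflist_None [simp]: "leaflist None = []"
  by (simp add: leaflist_def)

lemma leaflist_Some [simp]: "leaflist (Some t) = leaves t"
  by (simp add: leaflist_def)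

lemma cplx_leaflist: "cplx X = 2 * length (leaflist X) - 1"
  by (cases X) (auto simp: cplx_def length_leaves nodes_nleaves)

lemma cplx_eq_0_iff: "cplx X = 0 \<longleftrightarrow> X = None"
  by (cases X) (simp_all add: cplx_def nodes_nonzero)

lemma non_redundant_iff_positive_distinct:
  "non_redundant F X \<longleftrightarrow> positive_distinct (leaflist X)"
proof (cases X)
  case None
  thus ?thesis by (simp add: non_redundant_def positive_distinct_def)
next
  case (Some t)
  have "length (leaves t) \<ge> 1" using nleaves_pos[of t] by (simp add: length_leaves)
  hence "non_redundant F X \<longleftrightarrow> card (expressed_list F (leaves t)) = length (leaves t)"
    using Some by (auto simp: non_redundant_def expressed_eq_expressed_list cplx_leaflist)
  thus ?thesis using Some by (simp add: card_expressed_list_eq_iff)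
qed

lemma leaves_subst_leaf: "k < nleaves t \<Longrightarrow> leaves (subst_leaf t k u) = (leaves t)[k := u]"
  by (induction t arbitrary: k) (auto simp: list_update_append length_leaves)

lemma leaves_ins_node:
  "k < nodes t \<Longrightarrow> \<exists>a b. leaves t = a @ b \<and> leaves (ins_node t k u c) = a @ u # b"
proof (induction t k u c rule: ins_node.induct)
  case (1 t k u c)
  show ?case
  proof (cases "k = 0")
    case True thus ?thesis by (cases c) (auto intro: exI[of _ "[]"])
  next
    case False
    then obtain l r where t: "t = J l r" using 1(3) by (cases t) auto
    show ?thesis
    proof (cases "k - 1 < nodes l")
      case True
      then obtain a b where "leaves l = a @ b" "leaves (ins_node l (k - 1) u c) = a @ u # b"
        using 1(1)[OF False t] by blast
      thus ?thesis using t False True by (intro exI[of _ a] exI[of _ "b @ leaves r"]) auto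
    next
      case f2: False
      have "k - 1 - nodes l < nodes r" using 1(3) t False f2 by auto
      then obtain a b where "leaves r = a @ b" "leaves (ins_node r (k - 1 - nodes l) u c) = a @ u # b"
        using 1(2)[OF False t f2] by blast
      thus ?thesis using t False f2 by (intro exI[of _ "leaves l @ a"] exI[of _ b]) auto
    qed
  qed
qed

lemma leaflist_del_leaf:
  "k < nleaves t \<Longrightarrow> leaflist (del_leaf t k) = take k (leaves t) @ drop (Suc k) (leaves t)"
proof (induction t arbitrary: k)
  case (L a) thus ?case by simp
next
  case (J l r)
  show ?case
  proof (cases "k < nleaves l")
    case True
    have "leaflist (del_leaf l k) = take k (leaves l) @ drop (Suc k) (leaves l)" using J True by simp
    thus ?thesis using True
      by (cases "del_leaf l k") (auto simp: length_leaves)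
  next
    case False
    have "k - nleaves l < nleaves r" using J.prems False by simp
    hence "leaflist (del_leaf r (k - nleaves l)) = take (k - nleaves l) (leaves r) @ drop (Suc (k - nleaves l)) (leaves r)"
      using J by simp
    moreover have "Suc k - nleaves l = Suc (k - nleaves l)" using False by simp
    ultimately show ?thesis using False
      by (cases "del_leaf r (k - nleaves l)") (auto simp: length_leaves)
  qed
qed

lemma Pos_in_terminals: "Pos i \<in> terminals n \<longleftrightarrow> 1 \<le> i \<and> i \<le> n"
  by (auto simp: terminals_def)

lemma finite_terminals: "finite (terminals n)"
  by (simp add: terminals_def)

lemma card_terminals: "card (terminals n) = 2 * n"
proof -
  have "card (Pos ` {1..n}) = n" "card (Neg ` {1..n}) = n" by (simp_all add: card_image inj_on_def)
  moreover have "Pos ` {1..n} \<inter> Neg ` {1..n} = {}" by auto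
  ultimately show ?thesis unfolding terminals_def by (simp add: card_Un_disjoint)
qed

lemma terminals_nonempty: "n \<ge> 1 \<Longrightarrow> terminals n \<noteq> {}"
  using Pos_in_terminals[of 1 n] by auto

lemma pos_vars_terminals: "set l \<subseteq> terminals n \<Longrightarrow> pos_vars l \<subseteq> {1..n}"
  using Pos_in_terminals by (force simp: pos_vars_def)

definition leaf_mutation :: "nat \<Rightarrow> lit list \<Rightarrow> lit list \<Rightarrow> bool" where
  "leaf_mutation n xs ys \<longleftrightarrow> ys = xs
     \<or> (\<exists>a x b u. xs = a @ x # b \<and> ys = a @ u # b \<and> u \<in> terminals n)
     \<or> (\<exists>a b u. xs = a @ b \<and> ys = a @ u # b \<and> u \<in> terminals n)
     \<or> (\<exists>a x b. xs = a @ x # b \<and> ys = a @ b)"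

lemma leaf_mutation_terminals:
  "set xs \<subseteq> terminals n \<Longrightarrow> leaf_mutation n xs ys \<Longrightarrow> set ys \<subseteq> terminals n"
  unfolding leaf_mutation_def by auto

lemma hvl_prime_leaf_mutation:
  assumes n: "n \<ge> 1" and Y: "Y \<in> set_pmf (hvl_prime n X)"
  shows "leaf_mutation n (leaflist X) (leaflist Y)"
proof -
  have T: "finite (terminals n)" "terminals n \<noteq> {}" using finite_terminals terminals_nonempty n by auto
  consider (s) "Y \<in> set_pmf (substitute n X)" | (i) "Y \<in> set_pmf (insert_op n X)"
    | (d) "Y \<in> set_pmf (delete_op X)"
    using Y unfolding hvl_prime_def by (auto split: if_splits)
  note op_cases = this
  show ?thesis
  proof (cases X)
    case None
    thus ?thesis using T
      by (cases rule: op_cases) (auto simp: substitute_def delete_op_def insert_op_def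
          leaf_mutation_def intro!: exI[of _ "[]"])
  next
    case (Some t)
    have K: "{..<nleaves t} \<noteq> {}" "{..<nodes t} \<noteq> {}"
      using nleaves_pos[of t] nodes_nonzero[of t] by (auto simp: lessThan_empty_iff)
    have split: "leaves t = take k (leaves t) @ leaves t ! k # drop (Suc k) (leaves t)"
      if "k < nleaves t" for k
      using that by (simp add: id_take_nth_drop length_leaves)
    show ?thesis
    proof (cases rule: op_cases)
      case s
      then obtain k u where k: "k < nleaves t" and u: "u \<in> terminals n"
        and Yk: "Y = Some (subst_leaf t k u)"
        using Some K T by (auto simp: substitute_def)
      have "leaflist Y = take k (leaves t) @ u # drop (Suc k) (leaves t)"
        using Yk leaves_subst_leaf[OF k] k by (simp add: upd_conv_take_nth_drop length_leaves)
      thus ?thesis using Some u split[OF k] unfolding leaf_mutation_def by (metis leaflist_Some)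
    next
      case i
      then obtain k u c where k: "k < nodes t" and u: "u \<in> terminals n"
        and Yk: "Y = Some (ins_node t k u c)"
        using Some K T by (auto simp: insert_op_def)
      obtain a b where "leaves t = a @ b" "leaves (ins_node t k u c) = a @ u # b"
        using leaves_ins_node[OF k] by blast
      thus ?thesis using Some u Yk unfolding leaf_mutation_def by auto
    next
      case d
      then obtain k where k: "k < nleaves t" and Yk: "Y = del_leaf t k"
        using Some K by (auto simp: delete_op_def)
      thus ?thesis using Some split[OF k] leaflist_del_leaf[OF k] unfolding leaf_mutation_def
        by (metis leaflist_Some)
    qed
  qed
qed

lemma insert_op_hits:
  assumes n: "n \<ge> 1" and u: "u \<in> terminals n"
    and hit: "\<And>a b Y. leaflist X = a @ b \<Longrightarrow> leaflist Y = a @ u # b \<Longrightarrow> Y \<in> A"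
  shows "ennreal (1 / (2 * real n)) \<le> emeasure (measure_pmf (insert_op n X)) A"
proof -
  let ?T = "pmf_of_set (terminals n)"
  have T: "finite (terminals n)" "terminals n \<noteq> {}" using finite_terminals terminals_nonempty n by auto
  have u_prob: "ennreal (1 / (2 * real n)) \<le> emeasure (measure_pmf ?T) {u}"
    using emeasure_pmf_of_set_singleton[OF T(1) u] by (simp add: card_terminals)
  show ?thesis
  proof (cases X)
    case None
    have "emeasure (measure_pmf ?T) {u} \<le> emeasure (measure_pmf ?T) ((\<lambda>u. Some (L u)) -` A)"
      by (rule emeasure_mono) (use hit[of "[]" "[]" "Some (L u)"] None in auto)
    thus ?thesis using u_prob None by (simp add: insert_op_def)
  next
    case (Some t)
    let ?ins = "\<lambda>k u. bind_pmf (pmf_of_set UNIV) (\<lambda>c. return_pmf (Some (ins_node t k u c)))"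
    have per_position: "ennreal (1 / (2 * real n)) \<le> emeasure (measure_pmf (bind_pmf ?T (?ins k))) A"
      if k: "k < nodes t" for k
    proof -
      have "Some (ins_node t k u c) \<in> A" for c
        using leaves_ins_node[OF k, of u c] hit Some by auto
      hence all_c: "1 \<le> emeasure (measure_pmf (?ins k u)) A"
        by (intro emeasure_pmf_support_subset) auto
      have "ennreal (1 / (2 * real n)) \<le> emeasure (measure_pmf ?T) {u} * 1"
        using u_prob by simp
      also have "\<dots> \<le> emeasure (measure_pmf (bind_pmf ?T (?ins k))) A"
        by (rule emeasure_bind_pmf_lower) (use all_c in simp)
      finally show ?thesis .
    qed
    have "ennreal (1 / (2 * real n)) \<le> emeasure (measure_pmf (bind_pmf (pmf_of_set {..<nodes t})
             (\<lambda>k. bind_pmf ?T (?ins k)))) A"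
      by (rule emeasure_bind_pmf_lower_all)
        (use per_position nodes_nonzero[of t] in \<open>simp add: lessThan_empty_iff\<close>)
    moreover have "insert_op n X = bind_pmf (pmf_of_set {..<nodes t}) (\<lambda>k. bind_pmf ?T (?ins k))"
      using Some by (simp add: insert_op_def del: ins_node.simps)
    ultimately show ?thesis by simp
  qed
qed

lemma hvl_prime_ge_insert:
  "ennreal (1/3) * emeasure (measure_pmf (insert_op n X)) A \<le> emeasure (measure_pmf (hvl_prime n X)) A"
proof -
  have "ennreal (1/3) \<le> emeasure (measure_pmf (pmf_of_set {0::nat, 1, 2})) {1}"
    using emeasure_pmf_of_set_singleton[of "{0::nat, 1, 2}" 1] by simp
  hence "ennreal (1/3) * emeasure (measure_pmf (insert_op n X)) A
      \<le> emeasure (measure_pmf (pmf_of_set {0::nat, 1, 2})) {1} * emeasure (measure_pmf (insert_op n X)) A"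
    by (rule mult_right_mono) simp
  also have "\<dots> \<le> emeasure (measure_pmf (hvl_prime n X)) A"
    unfolding hvl_prime_def by (rule emeasure_bind_pmf_lower) simp
  finally show ?thesis .
qed

lemma hvl_prime_ge_delete:
  "ennreal (1/3) * emeasure (measure_pmf (delete_op X)) A \<le> emeasure (measure_pmf (hvl_prime n X)) A"
proof -
  have "ennreal (1/3) \<le> emeasure (measure_pmf (pmf_of_set {0::nat, 1, 2})) {2}"
    using emeasure_pmf_of_set_singleton[of "{0::nat, 1, 2}" 2] by simp
  hence "ennreal (1/3) * emeasure (measure_pmf (delete_op X)) A
      \<le> emeasure (measure_pmf (pmf_of_set {0::nat, 1, 2})) {2} * emeasure (measure_pmf (delete_op X)) A"
    by (rule mult_right_mono) simp
  also have "\<dots> \<le> emeasure (measure_pmf (hvl_prime n X)) A"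
    unfolding hvl_prime_def by (rule emeasure_bind_pmf_lower) simp
  finally show ?thesis .
qed

section \<open>The Pareto front\<close>

text \<open>The left comb with leaves x_1, ..., x_(k+1), and the tree x_1 ... x_k built from it:
  the canonical tree on the k-th point of the front.\<close>
fun comb :: "nat \<Rightarrow> stree" where
  "comb 0 = L (Pos 1)"
| "comb (Suc k) = J (comb k) (L (Pos (k + 2)))"

definition prefix_tree :: "nat \<Rightarrow> stree option" where
  "prefix_tree k = (if k = 0 then None else Some (comb (k - 1)))"

lemma leaves_comb: "leaves (comb k) = map Pos [1..<k+2]"
  by (induction k) auto

lemma leaflist_prefix_tree: "leaflist (prefix_tree k) = map Pos [1..<k+1]"
  by (cases k) (auto simp: prefix_tree_def leaves_comb)

locale smo_setting =
  fixes n :: nat and F :: fitness and w :: "nat \<Rightarrow> real"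
  assumes n_pos: "n \<ge> 1"
    and w_antitone: "\<forall>i\<in>{1..<n}. w i \<ge> w (Suc i)"
    and w_n_pos: "w n > 0"
begin

abbreviation valid :: "stree option \<Rightarrow> bool" where
  "valid X \<equiv> valid_tree n X"

text \<open>W k is the largest fitness achievable by expressing k variables.\<close>
definition W :: "nat \<Rightarrow> real" where
  "W k = (\<Sum>i\<in>{1..k}. w i)"

lemma w_antimono:
  assumes "1 \<le> i" "i \<le> j" "j \<le> n"
  shows "w j \<le> w i"
  using assms(2,3)
proof (induction j rule: dec_induct)
  case (step j)
  hence "w (Suc j) \<le> w j" using w_antitone assms(1) by auto
  thus ?case using step by simp
qed simp

lemma w_pos: "1 \<le> i \<Longrightarrow> i \<le> n \<Longrightarrow> w i > 0"
  using w_antimono[of i n] w_n_pos by simp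

lemma W_0 [simp]: "W 0 = 0"
  by (simp add: W_def)

lemma W_Suc: "W (Suc k) = W k + w (Suc k)"
  by (simp add: W_def)

lemma W_strict_mono:
  assumes "k < k'" "k' \<le> n"
  shows "W k < W k'"
proof -
  have "Suc k \<le> k'" using assms(1) by simp
  thus ?thesis using assms(2)
  proof (induction k' rule: dec_induct)
    case base thus ?case using w_pos[of "Suc k"] by (simp add: W_Suc)
  next
    case (step k')
    thus ?case using w_pos[of "Suc k'"] by (simp add: W_Suc)
  qed
qed

lemma sum_le_W: "m \<le> n \<Longrightarrow> A \<subseteq> {1..m} \<Longrightarrow> sum w A \<le> W (card A)"
proof (induction m arbitrary: A)
  case 0 hence "A = {}" by auto
  thus ?case by simp
next
  case (Suc m)
  show ?case
  proof (cases "Suc m \<in> A")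
    case False
    hence "A \<subseteq> {1..m}" using Suc.prems by (auto simp: le_Suc_eq)
    thus ?thesis using Suc.IH[of A] Suc.prems by simp
  next
    case True
    define A' where "A' = A - {Suc m}"
    have A': "A' \<subseteq> {1..m}" using Suc.prems by (auto simp: A'_def le_Suc_eq)
    have fin: "finite A'" using A' finite_subset by blast
    have A: "A = insert (Suc m) A'" "Suc m \<notin> A'" using True by (auto simp: A'_def)
    have cA: "card A = Suc (card A')" using A fin by simp
    have cle: "card A' \<le> m" using card_mono[OF _ A'] by simp
    have "sum w A = sum w A' + w (Suc m)" using A fin by simp
    also have "\<dots> \<le> W (card A') + w (Suc (card A'))"
      using Suc.IH[OF _ A'] Suc.prems w_antimono[of "Suc (card A')" "Suc m"] cle by simp
    also have "\<dots> = W (card A)" using cA W_Suc by simp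
    finally show ?thesis .
  qed
qed

lemma expressed_in_range: "valid X \<Longrightarrow> expressed_list F (leaflist X) \<subseteq> {1..n}"
  using pos_vars_terminals expressed_list_subset unfolding valid_tree_def by blast

lemma fit_le_W: "valid X \<Longrightarrow> fit F w X \<le> W (card (expressed_list F (leaflist X)))"
  unfolding fit_eq_sum_expressed_list by (rule sum_le_W[OF order_refl expressed_in_range])

lemma card_expressed_le_n: "valid X \<Longrightarrow> card (expressed_list F (leaflist X)) \<le> n"
  using card_mono[OF _ expressed_in_range] by fastforce

lemma length_leaflist_le_n: "valid X \<Longrightarrow> non_redundant F X \<Longrightarrow> length (leaflist X) \<le> n"
  using card_expressed_le_n card_expressed_list_eq_iff non_redundant_iff_positive_distinct
  by metis

lemma cplx_ge_expressed: "2 * card (expressed_list F (leaflist X)) - 1 \<le> cplx X"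
  using card_expressed_list_le[of F "leaflist X"] by (simp add: cplx_leaflist)

text \<open>The objective vectors of the Pareto front are among these points.\<close>
definition front_point :: "nat \<Rightarrow> real \<times> nat" where
  "front_point k = (W k, 2 * k - 1)"

lemma front_point_if_dominating:
  assumes v: "valid Y" and k: "k \<le> n" and f: "W k \<le> fit F w Y" and c: "cplx Y \<le> 2 * k - 1"
  shows "objvec F w Y = front_point k"
proof -
  define e where "e = card (expressed_list F (leaflist Y))"
  have fb: "fit F w Y \<le> W e" using fit_le_W[OF v] e_def by simp
  have "e \<le> n" using card_expressed_le_n[OF v] e_def by simp
  hence ek: "k \<le> e" using W_strict_mono[of e k] fb f k by (cases "e < k") auto
  have ce: "2 * e - 1 \<le> cplx Y" using cplx_ge_expressed e_def by simp
  show ?thesis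
  proof (cases "k = 0")
    case True
    hence "Y = None" using c cplx_eq_0_iff by simp
    thus ?thesis using True fit_None by (simp add: objvec_def front_point_def cplx_def)
  next
    case False
    hence "e = k" using ek ce c by simp
    thus ?thesis using fb f c ce by (simp add: objvec_def front_point_def)
  qed
qed

lemma prefix_tree_on_front:
  assumes "k \<le> n"
  shows "valid (prefix_tree k)" "fit F w (prefix_tree k) = W k" "cplx (prefix_tree k) = 2 * k - 1"
proof -
  have p: "positive_distinct (leaflist (prefix_tree k))"
    by (auto simp: leaflist_prefix_tree positive_distinct_def distinct_map inj_on_def)
  have "pos_vars (leaflist (prefix_tree k)) = {1..k}"
    by (auto simp: leaflist_prefix_tree pos_vars_def)
  thus "fit F w (prefix_tree k) = W k"
    by (simp add: fit_eq_sum_expressed_list expressed_list_positive_distinct[OF p] W_def)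
  show "valid (prefix_tree k)"
    using assms by (auto simp: valid_tree_def leaflist_prefix_tree Pos_in_terminals)
  show "cplx (prefix_tree k) = 2 * k - 1" by (simp add: cplx_leaflist leaflist_prefix_tree)
qed

text \<open>Every Pareto optimal tree sits on a front point: otherwise the prefix tree expressing
  as many variables would dominate it.\<close>
lemma pareto_optimal_front_point:
  assumes po: "pareto_optimal n F w X"
  shows "\<exists>k\<le>n. objvec F w X = front_point k"
proof -
  have v: "valid X" using po by (simp add: pareto_optimal_def)
  define e where "e = card (expressed_list F (leaflist X))"
  have fb: "fit F w X \<le> W e" using fit_le_W[OF v] e_def by simp
  have en: "e \<le> n" using card_expressed_le_n[OF v] e_def by simp
  have cb: "2 * e - 1 \<le> cplx X" using cplx_ge_expressed e_def by simp
  have "\<not> strictly_dom F w (prefix_tree e) X"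
    using po prefix_tree_on_front[OF en] by (auto simp: pareto_optimal_def)
  hence "fit F w X = W e" "cplx X = 2 * e - 1"
    using prefix_tree_on_front[OF en] fb cb by (auto simp: strictly_dom_def weakly_dom_def)
  thus ?thesis using en by (auto simp: objvec_def front_point_def)
qed

definition covered_upto :: "stree option set \<Rightarrow> nat \<Rightarrow> bool" where
  "covered_upto P k \<longleftrightarrow> (\<forall>k'\<le>k. \<exists>Z\<in>P. objvec F w Z = front_point k')"

lemma covers_front_if_covered_upto: "covered_upto P n \<Longrightarrow> covers_front n F w P"
  unfolding covers_front_def pareto_front_def covered_upto_def
  using pareto_optimal_front_point by fastforce


section \<open>The population invariant\<close>

lemma w_nonneg: "i \<in> {1..n} \<Longrightarrow> 0 \<le> w i"
  using w_pos[of i] by simp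

lemma sum_expressed_le_pos_vars:
  "set ys \<subseteq> terminals n \<Longrightarrow> sum w (expressed_list F ys) \<le> sum w (pos_vars ys)"
  using pos_vars_terminals[of ys n] w_nonneg
  by (intro sum_mono2[OF finite_pos_vars expressed_list_subset]) auto

text \<open>A substitution that destroys positive distinctness removes a variable without adding
  a new one, so the positively occurring weight drops.\<close>
lemma substitution_loses_weight:
  assumes px: "positive_distinct (a @ x # b)" and v: "set (a @ x # b) \<subseteq> terminals n"
    and pu: "\<not> positive_distinct (a @ u # b)"
  shows "sum w (pos_vars (a @ u # b)) < sum w (pos_vars (a @ x # b))"
proof -
  obtain j where x: "x = Pos j" using px by (auto simp: positive_distinct_def)
  have j_new: "j \<notin> pos_vars a \<union> pos_vars b" using px x by (auto simp: positive_distinct_def pos_vars_def)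
  have x_vars: "pos_vars (a @ x # b) = insert j (pos_vars a \<union> pos_vars b)" using x by simp
  have range: "pos_vars (a @ x # b) \<subseteq> {1..n}" using pos_vars_terminals[OF v] .
  have "pos_vars [u] \<subseteq> pos_vars a \<union> pos_vars b"
    using positive_distinct_insert_fails[OF positive_distinct_delete[OF px] pu] .
  hence "pos_vars (a @ u # b) \<subseteq> pos_vars a \<union> pos_vars b" by auto
  hence "sum w (pos_vars (a @ u # b)) \<le> sum w (pos_vars a \<union> pos_vars b)"
    using x_vars range w_nonneg by (intro sum_mono2) auto
  also have "\<dots> < sum w (pos_vars (a @ x # b))"
    using x_vars j_new w_pos[of j] range by simp
  finally show ?thesis .
qed

lemma leaf_mutation_positive_distinct:
  assumes p: "positive_distinct xs" and v: "set xs \<subseteq> terminals n" and m: "leaf_mutation n xs ys"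
  shows "positive_distinct ys
     \<or> (sum w (expressed_list F ys) < sum w (expressed_list F xs) \<and> length ys = length xs)
     \<or> (sum w (expressed_list F ys) \<le> sum w (expressed_list F xs) \<and> length xs < length ys)"
proof -
  have ys_le: "sum w (expressed_list F ys) \<le> sum w (pos_vars ys)"
    using sum_expressed_le_pos_vars[OF leaf_mutation_terminals[OF v m]] .
  have xs_eq: "expressed_list F xs = pos_vars xs" using expressed_list_positive_distinct[OF p] .
  consider (eq) "ys = xs" | (sub) a x b u where "xs = a @ x # b" "ys = a @ u # b"
    | (ins) a b u where "xs = a @ b" "ys = a @ u # b"
    | (del) a x b where "xs = a @ x # b" "ys = a @ b"
    using m unfolding leaf_mutation_def by metis
  thus ?thesis
  proof cases
    case (sub a x b u)
    thus ?thesis using substitution_loses_weight[of a x b u] p v ys_le xs_eq by fastforce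
  next
    case (ins a b u)
    show ?thesis
    proof (cases "positive_distinct ys")
      case False
      have "pos_vars [u] \<subseteq> pos_vars a \<union> pos_vars b"
        using positive_distinct_insert_fails[of a b u] p ins False by simp
      hence "pos_vars ys = pos_vars xs" using ins by auto
      thus ?thesis using ys_le xs_eq ins by simp
    qed simp
  qed (use p positive_distinct_delete in simp_all)
qed

lemma mutant_non_redundant_or_dominated:
  assumes v: "valid X" and nr: "non_redundant F X" and Y: "Y \<in> set_pmf (hvl_prime n X)"
  shows "valid Y \<and> (non_redundant F Y \<or> strictly_dom F w X Y)"
proof -
  have m: "leaf_mutation n (leaflist X) (leaflist Y)" using hvl_prime_leaf_mutation[OF n_pos Y] .
  have "valid Y" using leaf_mutation_terminals[OF _ m] v by (simp add: valid_tree_def)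
  moreover have "non_redundant F Y \<or> strictly_dom F w X Y"
    using leaf_mutation_positive_distinct[OF _ _ m] nr v
    unfolding fit_eq_sum_expressed_list non_redundant_iff_positive_distinct valid_tree_def
      strictly_dom_def weakly_dom_def cplx_leaflist by auto
  ultimately show ?thesis by simp
qed

definition update :: "stree option set \<Rightarrow> stree option \<Rightarrow> stree option set" where
  "update P Y = (if \<exists>Z\<in>P. strictly_dom F w Z Y then P
                 else (P - {Z\<in>P. weakly_dom F w Y Z}) \<union> {Y})"

lemma smo_step_eq_update:
  "smo_step n F w P = bind_pmf (pmf_of_set P) (\<lambda>X. map_pmf (update P) (hvl_prime n X))"
  by (simp add: smo_step_def update_def map_pmf_def)

lemma set_pmf_smo_step:
  assumes "finite P" "P \<noteq> {}" "P' \<in> set_pmf (smo_step n F w P)"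
  obtains X Y where "X \<in> P" "Y \<in> set_pmf (hvl_prime n X)" "P' = update P Y"
  using assms unfolding smo_step_eq_update by auto

lemma update_weakly_dominates:
  "Z \<in> P \<Longrightarrow> \<exists>Z'\<in>update P Y. weakly_dom F w Z' Z"
  unfolding update_def by (cases "weakly_dom F w Y Z") (auto simp: weakly_dom_def)

lemma update_subset: "update P Y \<subseteq> insert Y P"
  unfolding update_def by auto

lemma update_accepts: "\<not> (\<exists>Z\<in>P. strictly_dom F w Z Y) \<Longrightarrow> Y \<in> update P Y"
  unfolding update_def by auto

definition good_population :: "stree option set \<Rightarrow> bool" where
  "good_population P \<longleftrightarrow> finite P \<and> P \<noteq> {} \<and> (\<forall>Z\<in>P. valid Z \<and> non_redundant F Z)
      \<and> (\<forall>Z1\<in>P. \<forall>Z2\<in>P. Z1 \<noteq> Z2 \<longrightarrow> \<not> weakly_dom F w Z1 Z2)"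

lemma good_population_update:
  assumes good: "good_population P" and X: "X \<in> P" and Y: "Y \<in> set_pmf (hvl_prime n X)"
  shows "good_population (update P Y)"
proof (cases "\<exists>Z\<in>P. strictly_dom F w Z Y")
  case True thus ?thesis using good by (simp add: update_def)
next
  case False
  hence "valid Y" "non_redundant F Y"
    using mutant_non_redundant_or_dominated[OF _ _ Y] good X by (auto simp: good_population_def)
  moreover have "\<not> weakly_dom F w Z Y" if "Z \<in> P" "\<not> weakly_dom F w Y Z" for Z
    using False that by (auto simp: strictly_dom_def weakly_dom_def)
  ultimately show ?thesis
    using False good by (auto simp: update_def good_population_def)
qed

lemma good_population_smo_step:
  "good_population P \<Longrightarrow> P' \<in> set_pmf (smo_step n F w P) \<Longrightarrow> good_population P'"
  by (metis good_population_def good_population_update set_pmf_smo_step)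

text \<open>Members of a good population have distinct sizes between 0 and n.\<close>
lemma card_good_population:
  assumes good: "good_population P"
  shows "card P \<le> Suc n"
proof -
  let ?size = "\<lambda>Z. length (leaflist Z)"
  have size_le: "?size Z \<le> n" if "Z \<in> P" for Z
    using that good length_leaflist_le_n by (simp add: good_population_def)
  have "inj_on ?size P"
  proof (rule inj_onI)
    fix Z1 Z2 assume z: "Z1 \<in> P" "Z2 \<in> P" "?size Z1 = ?size Z2"
    hence "weakly_dom F w Z1 Z2 \<or> weakly_dom F w Z2 Z1"
      by (auto simp: weakly_dom_def cplx_leaflist)
    thus "Z1 = Z2" using good z by (auto simp: good_population_def)
  qed
  hence "card P = card (?size ` P)" by (simp add: card_image)
  also have "\<dots> \<le> card {0..n}" using size_le by (intro card_mono) auto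
  finally show ?thesis by simp
qed

section \<open>The potential\<close>

definition covered_levels :: "stree option set \<Rightarrow> nat" where
  "covered_levels P = card {k\<in>{1..n}. covered_upto P k}"

text \<open>Phase one (empty tree absent): the population becomes simpler.  Phase two: the front
  is covered from the empty tree upwards.\<close>
definition potential :: "stree option set \<Rightarrow> nat" where
  "potential P = (if None \<in> P then 2 * n + covered_levels P else 2 * n - Min (cplx ` P))"

lemma potential_le: "potential P \<le> 3 * n"
proof -
  have "covered_levels P \<le> card {1..n}" unfolding covered_levels_def by (rule card_mono) auto
  thus ?thesis by (simp add: potential_def) arith
qed

lemma covered_upto_mono:
  assumes D: "\<forall>Z\<in>P. \<exists>Z'\<in>P'. weakly_dom F w Z' Z" and V: "\<forall>Z\<in>P'. valid Z"
    and c: "covered_upto P k" and k: "k \<le> n"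
  shows "covered_upto P' k"
  unfolding covered_upto_def
proof (intro allI impI)
  fix k' assume k': "k' \<le> k"
  obtain Z where Z: "Z \<in> P" "objvec F w Z = front_point k'" using c k' unfolding covered_upto_def by blast
  obtain Z' where Z': "Z' \<in> P'" "weakly_dom F w Z' Z" using D Z by blast
  have "W k' \<le> fit F w Z'" "cplx Z' \<le> 2 * k' - 1"
    using Z(2) Z'(2) unfolding weakly_dom_def objvec_def front_point_def by auto
  hence "objvec F w Z' = front_point k'" using front_point_if_dominating V Z'(1) k k' by simp
  thus "\<exists>Z\<in>P'. objvec F w Z = front_point k'" using Z' by blast
qed

text \<open>Only the empty tree weakly dominates the empty tree.\<close>
lemma None_persists:
  assumes D: "\<forall>Z\<in>P. \<exists>Z'\<in>P'. weakly_dom F w Z' Z" and "None \<in> P"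
  shows "None \<in> P'"
proof -
  obtain Z' where "Z' \<in> P'" "cplx Z' \<le> cplx None" using assms by (auto simp: weakly_dom_def)
  thus ?thesis using cplx_eq_0_iff by (auto simp: cplx_def)
qed

lemma covered_levels_mono:
  assumes D: "\<forall>Z\<in>P. \<exists>Z'\<in>P'. weakly_dom F w Z' Z" and V: "\<forall>Z\<in>P'. valid Z"
  shows "{k\<in>{1..n}. covered_upto P k} \<subseteq> {k\<in>{1..n}. covered_upto P' k}"
  using covered_upto_mono[OF D V] by auto

text \<open>Under the same condition the potential does not drop: phase two is never left, the
  covered levels persist, and the minimal complexity does not grow.\<close>
lemma potential_mono:
  assumes D: "\<forall>Z\<in>P. \<exists>Z'\<in>P'. weakly_dom F w Z' Z" and V: "\<forall>Z\<in>P'. valid Z"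
    and fin: "finite P" "P \<noteq> {}" "finite P'"
  shows "potential P \<le> potential P'"
proof (cases "None \<in> P")
  case True
  have "None \<in> P'" using None_persists[OF D True] .
  moreover have "covered_levels P \<le> covered_levels P'"
    unfolding covered_levels_def using covered_levels_mono[OF D V] by (intro card_mono) auto
  ultimately show ?thesis using True by (simp add: potential_def)
next
  case False
  have "Min (cplx ` P) \<in> cplx ` P" using fin by simp
  then obtain Z where Z: "Z \<in> P" "cplx Z = Min (cplx ` P)" by auto
  then obtain Z' where "Z' \<in> P'" "cplx Z' \<le> cplx Z" using D by (auto simp: weakly_dom_def)
  hence "Min (cplx ` P') \<le> Min (cplx ` P)" using Z fin(3) by (metis Min_le finite_imageI image_eqI le_trans)
  thus ?thesis using False by (simp add: potential_def) arith
qed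

lemma potential_mono_smo_step:
  assumes good: "good_population P" and P': "P' \<in> set_pmf (smo_step n F w P)"
  shows "potential P \<le> potential P'"
proof -
  have fin: "finite P" "P \<noteq> {}" using good by (auto simp: good_population_def)
  obtain X Y where "X \<in> P" "Y \<in> set_pmf (hvl_prime n X)" "P' = update P Y"
    using set_pmf_smo_step[OF fin P'] by blast
  moreover have "good_population P'" using good_population_smo_step[OF good P'] .
  ultimately show ?thesis
    using potential_mono update_weakly_dominates good by (metis good_population_def)
qed

text \<open>Phase one: deleting a leaf of a simplest tree yields a strictly simpler tree, which is
  accepted and lowers the minimal complexity (or is the empty tree, starting phase two).\<close>
lemma deletion_raises_potential:
  assumes good: "good_population P" and N: "None \<notin> P" and X: "X \<in> P"
    and X_min: "cplx X = Min (cplx ` P)" and Y: "Y \<in> set_pmf (delete_op X)"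
  shows "potential P < potential (update P Y)"
proof -
  have fin: "finite P" "P \<noteq> {}" using good by (auto simp: good_population_def)
  obtain t where t: "X = Some t" using X N by (cases X) auto
  obtain k where k: "k < nleaves t" and Yk: "Y = del_leaf t k"
    using Y t nleaves_pos[of t] by (auto simp: delete_op_def lessThan_empty_iff)
  have "length (leaflist Y) + 1 = length (leaves t)"
    using leaflist_del_leaf[OF k] k Yk by (simp add: length_leaves)
  hence cY: "cplx Y < cplx X" using t by (simp add: cplx_leaflist)
  have min_le: "cplx X \<le> cplx Z" if "Z \<in> P" for Z using X_min fin that by simp
  have "\<not> (\<exists>Z\<in>P. strictly_dom F w Z Y)"
    using min_le cY by (force simp: strictly_dom_def weakly_dom_def)
  hence YP: "Y \<in> update P Y" by (rule update_accepts)
  have "length (leaflist X) \<le> n"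
    using good X length_leaflist_le_n by (simp add: good_population_def)
  hence X_le: "cplx X \<le> 2 * n - 1" by (simp add: cplx_leaflist)
  show ?thesis
  proof (cases "Y = None")
    case True
    have "potential P < 2 * n"
      using N X_min cY n_pos by (simp add: potential_def)
    thus ?thesis using YP True by (simp add: potential_def)
  next
    case False
    have N': "None \<notin> update P Y" using update_subset[of P Y] N False by blast
    have "finite (update P Y)" using update_subset[of P Y] fin by (meson finite_insert finite_subset)
    hence "Min (cplx ` update P Y) \<le> cplx Y" using YP by simp
    thus ?thesis using N N' cY X_le X_min by (simp add: potential_def)
  qed
qed

lemma insertion_reaches_next_front_point:
  assumes vZ: "valid Z" and nrZ: "non_redundant F Z" and oZ: "objvec F w Z = front_point k"
    and k: "k < n" and i: "1 \<le> i" "i \<le> Suc k" "i \<notin> pos_vars (leaflist Z)"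
    and ab: "leaflist Z = a @ b" "leaflist Y = a @ Pos i # b"
  shows "valid Y \<and> objvec F w Y = front_point (Suc k)"
proof -
  have pZ: "positive_distinct (leaflist Z)" using nrZ non_redundant_iff_positive_distinct by simp
  have fZ: "sum w (pos_vars (leaflist Z)) = W k" and lZ: "length (leaflist Z) = k"
    using oZ by (auto simp: objvec_def front_point_def cplx_leaflist fit_eq_sum_expressed_list
        expressed_list_positive_distinct[OF pZ])
  have pY: "positive_distinct (leaflist Y)"
    using positive_distinct_insert[of a b i] pZ i(3) ab by simp
  have "expressed_list F (leaflist Y) = insert i (pos_vars (leaflist Z))"
    using expressed_list_positive_distinct[OF pY] ab by auto
  hence "fit F w Y = w i + W k" using i(3) fZ by (simp add: fit_eq_sum_expressed_list)
  moreover have "w (Suc k) \<le> w i" using w_antimono[of i "Suc k"] i k by simp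
  ultimately have fY: "W (Suc k) \<le> fit F w Y" by (simp add: W_Suc)
  have cY: "cplx Y = 2 * Suc k - 1" using ab lZ by (simp add: cplx_leaflist)
  have "Pos i \<in> terminals n" using Pos_in_terminals i k by simp
  hence vY: "valid Y" using vZ ab by (auto simp: valid_tree_def)
  thus ?thesis using front_point_if_dominating[OF vY _ fY] cY k by simp
qed

lemma front_extension_raises_potential:
  assumes good: "good_population P" and N: "None \<in> P" and k: "k < n"
    and cv: "covered_upto P k" and nc: "\<not> covered_upto P (Suc k)"
    and vY: "valid Y" and oY: "objvec F w Y = front_point (Suc k)"
  shows "potential P < potential (update P Y)"
proof -
  have V: "\<forall>Z\<in>P. valid Z" using good by (simp add: good_population_def)
  have "\<not> strictly_dom F w Z Y" if Z: "Z \<in> P" for Z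
  proof
    assume dom: "strictly_dom F w Z Y"
    hence "W (Suc k) \<le> fit F w Z" "cplx Z \<le> 2 * Suc k - 1"
      using oY by (auto simp: strictly_dom_def weakly_dom_def objvec_def front_point_def)
    hence "objvec F w Z = objvec F w Y" using front_point_if_dominating V Z k oY by simp
    thus False using dom by (simp add: strictly_dom_def objvec_def)
  qed
  hence YP: "Y \<in> update P Y" using update_accepts by blast
  have D: "\<forall>Z\<in>P. \<exists>Z'\<in>update P Y. weakly_dom F w Z' Z" using update_weakly_dominates by blast
  have V': "\<forall>Z\<in>update P Y. valid Z" using update_subset V vY by blast
  have "covered_upto (update P Y) (Suc k)"
    unfolding covered_upto_def
  proof (intro allI impI)
    fix k' assume "k' \<le> Suc k"
    then consider "k' \<le> k" | "k' = Suc k" by linarith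
    thus "\<exists>Z\<in>update P Y. objvec F w Z = front_point k'"
    proof cases
      case 1
      thus ?thesis using covered_upto_mono[OF D V' cv] k unfolding covered_upto_def by simp
    qed (use YP oY in blast)
  qed
  hence "Suc k \<in> {k\<in>{1..n}. covered_upto (update P Y) k} - {k\<in>{1..n}. covered_upto P k}"
    using nc k by simp
  hence "{k\<in>{1..n}. covered_upto P k} \<subset> {k\<in>{1..n}. covered_upto (update P Y) k}"
    using covered_levels_mono[OF D V'] by blast
  hence "covered_levels P < covered_levels (update P Y)"
    unfolding covered_levels_def by (rule psubset_card_mono[rotated]) simp
  thus ?thesis using N None_persists[OF D N] by (simp add: potential_def)
qed

definition improving_offspring :: "stree option set \<Rightarrow> stree option set" where
  "improving_offspring P = {Y. potential P < potential (update P Y)}"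

lemma phase_one_progress:
  assumes good: "good_population P" and N: "None \<notin> P"
  shows "\<exists>X\<in>P. ennreal (1/3) \<le> emeasure (measure_pmf (hvl_prime n X)) (improving_offspring P)"
proof -
  have "Min (cplx ` P) \<in> cplx ` P" using good by (simp add: good_population_def)
  then obtain X where X: "X \<in> P" "cplx X = Min (cplx ` P)" by auto
  have "1 \<le> emeasure (measure_pmf (delete_op X)) (improving_offspring P)"
    using deletion_raises_potential[OF good N X]
    by (intro emeasure_pmf_support_subset) (auto simp: improving_offspring_def)
  hence "ennreal (1/3) \<le> ennreal (1/3) * emeasure (measure_pmf (delete_op X)) (improving_offspring P)"
    using mult_left_mono[of 1 _ "ennreal (1/3)"] by simp
  thus ?thesis using hvl_prime_ge_delete X(1) by (meson order_trans)
qed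

text \<open>In phase two, let k be the last covered level and Z the tree on front point k: one of
  x_1, ..., x_{k+1} is missing in Z, and inserting it anywhere covers level k+1.\<close>
lemma phase_two_progress:
  assumes good: "good_population P" and N: "None \<in> P" and nc: "\<not> covered_upto P n"
  shows "\<exists>X\<in>P. ennreal (1 / (6 * real n))
                  \<le> emeasure (measure_pmf (hvl_prime n X)) (improving_offspring P)"
proof -
  have "objvec F w None = front_point 0"
    using fit_None by (simp add: objvec_def front_point_def cplx_def)
  hence "covered_upto P 0" using N by (auto simp: covered_upto_def)
  then obtain k where k: "k < n" and cv: "covered_upto P k" and nck: "\<not> covered_upto P (Suc k)"
    using ex_least_nat_less[of "\<lambda>k. \<not> covered_upto P k" n] nc
    by (auto simp: covered_upto_def) (meson order_refl)
  obtain Z where Z: "Z \<in> P" and oZ: "objvec F w Z = front_point k" using cv by (auto simp: covered_upto_def)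
  have vZ: "valid Z" and nrZ: "non_redundant F Z" using good Z by (auto simp: good_population_def)
  have "card (pos_vars (leaflist Z)) = k"
    using oZ card_pos_vars_positive_distinct non_redundant_iff_positive_distinct nrZ
    by (auto simp: objvec_def front_point_def cplx_leaflist)
  hence "\<not> {1..Suc k} \<subseteq> pos_vars (leaflist Z)"
    using card_mono[of "pos_vars (leaflist Z)" "{1..Suc k}"] by auto
  then obtain i where "i \<in> {1..Suc k}" "i \<notin> pos_vars (leaflist Z)" by blast
  hence i: "1 \<le> i" "i \<le> Suc k" "i \<notin> pos_vars (leaflist Z)" by auto
  have "Pos i \<in> terminals n" using Pos_in_terminals i k by simp
  hence "ennreal (1 / (2 * real n)) \<le> emeasure (measure_pmf (insert_op n Z)) (improving_offspring P)"
    using insertion_reaches_next_front_point[OF vZ nrZ oZ k i]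
      front_extension_raises_potential[OF good N k cv nck]
    by (intro insert_op_hits[OF n_pos]) (auto simp: improving_offspring_def)
  hence "ennreal (1/3) * ennreal (1 / (2 * real n))
      \<le> emeasure (measure_pmf (hvl_prime n Z)) (improving_offspring P)"
    using hvl_prime_ge_insert by (meson mult_left_mono order_trans zero_le)
  thus ?thesis using Z by (auto simp: ennreal_mult[symmetric])
qed

text \<open>In either phase some parent yields progress with probability at least 1/(6n); selecting
  it costs a further factor of at most n+1, the maximal population size.\<close>
lemma smo_step_progress:
  assumes good: "good_population P" and nc: "\<not> covers_front n F w P"
  shows "ennreal (1 / (6 * real n * (real n + 1)))
           \<le> emeasure (measure_pmf (smo_step n F w P)) {P'. potential P < potential P'}"
proof -
  let ?A = "{P'. potential P < potential P'}"
  obtain X where X: "X \<in> P"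
    and hit: "ennreal (1 / (6 * real n)) \<le> emeasure (measure_pmf (hvl_prime n X)) (improving_offspring P)"
  proof (cases "None \<in> P")
    case True
    thus ?thesis using that phase_two_progress[OF good True] nc covers_front_if_covered_upto by blast
  next
    case False
    moreover have "ennreal (1 / (6 * real n)) \<le> ennreal (1/3)" using n_pos by (intro ennreal_leI) simp
    ultimately show ?thesis using that phase_one_progress[OF good] by (meson order_trans)
  qed
  have fin: "finite P" using good by (simp add: good_population_def)
  have "0 < card P" "card P \<le> Suc n" using fin X card_good_population[OF good] card_gt_0_iff by blast+
  hence "ennreal (1 / (real n + 1)) \<le> ennreal (1 / real (card P))"
    by (intro ennreal_leI divide_left_mono) auto
  also have "\<dots> \<le> emeasure (measure_pmf (pmf_of_set P)) {X}"
    using emeasure_pmf_of_set_singleton[OF fin X] .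
  finally have "ennreal (1 / (real n + 1)) * ennreal (1 / (6 * real n))
      \<le> emeasure (measure_pmf (pmf_of_set P)) {X}
         * emeasure (measure_pmf (map_pmf (update P) (hvl_prime n X))) ?A"
    using hit by (intro mult_mono) (auto simp: improving_offspring_def)
  also have "\<dots> \<le> emeasure (measure_pmf (smo_step n F w P)) ?A"
    unfolding smo_step_eq_update by (rule emeasure_bind_pmf_lower) simp
  finally show ?thesis by (simp add: ennreal_mult[symmetric] field_simps)
qed

lemma stopped_step_preserves:
  assumes "good_population P" "P' \<in> set_pmf (stopped_step n F w P)"
  shows "good_population P' \<and> potential P \<le> potential P'"
  using assms good_population_smo_step potential_mono_smo_step
  by (auto simp: stopped_step_def split: if_splits)

lemma stopped_step_progress:
  "good_population P \<Longrightarrow> \<not> covers_front n F w P \<Longrightarrow>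
   ennreal (1 / (6 * real n * (real n + 1)))
     \<le> emeasure (measure_pmf (stopped_step n F w P)) {P'. potential P < potential P'}"
  by (simp add: stopped_step_def smo_step_progress)

lemma expected_opt_time_le:
  assumes "valid X0" "non_redundant F X0"
  shows "expected_opt_time n F w X0 \<le> ennreal (18 * real n ^ 2 * (real n + 1))"
proof -
  have "expected_opt_time n F w X0 \<le> ennreal (real (3 * n) / (1 / (6 * real n * (real n + 1))))"
    unfolding expected_opt_time_def
  proof (rule hitting_time_by_potential[where I = good_population and phi = potential])
    show "good_population {X0}" using assms by (simp add: good_population_def)
  qed (use n_pos stopped_step_preserves stopped_step_progress potential_le in auto)
  thus ?thesis by (simp add: power2_eq_square algebra_simps)
qed

end

theorem theorem6:
  fixes F :: fitness
  shows "\<exists>c::real. \<forall>(n::nat) (w::nat \<Rightarrow> real) (X0::stree option).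
           n \<ge> 1 \<longrightarrow>
           (\<forall>i\<in>{1..<n}. w i \<ge> w (Suc i)) \<longrightarrow> w n > 0 \<longrightarrow>
           valid_tree n X0 \<longrightarrow> non_redundant F X0 \<longrightarrow>
           expected_opt_time n F w X0 \<le> ennreal (c * real n ^ 3)"
proof (intro exI allI impI)
  fix n :: nat and w :: "nat \<Rightarrow> real" and X0
  assume n: "n \<ge> 1" and w: "\<forall>i\<in>{1..<n}. w i \<ge> w (Suc i)" "w n > 0"
    and X0: "valid_tree n X0" "non_redundant F X0"
  interpret smo_setting n F w using n w by unfold_locales
  have "18 * real n ^ 2 * (real n + 1) \<le> 18 * real n ^ 2 * (2 * real n)"
    using n by (intro mult_left_mono) auto
  hence "ennreal (18 * real n ^ 2 * (real n + 1)) \<le> ennreal (36 * real n ^ 3)"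
    by (intro ennreal_leI) (simp add: power2_eq_square power3_eq_cube)
  thus "expected_opt_time n F w X0 \<le> ennreal (36 * real n ^ 3)"
    using expected_opt_time_le[OF X0] by order
qed

end
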